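(* Assume $p$ is odd and $\ell\ge2$. Every cuspidal or split semisimple regular representation of ${\rm SL}_2(\mathfrak o_\ell)$ admits a $\theta$-Whittaker model for every non-degenerate character $\theta$ of $\mathbf U(\mathfrak o_\ell)$.
   Context: $\mathfrak o$: ring of integers of a non-archimedean local field, uniformizer $\varpi$, residue field $\mathbb F_q$ of characteristic $p$; $\mathfrak o_r=\mathfrak o/\varpi^r\mathfrak o$. $\mathbf U(\mathfrak o_\ell)$ is the upper unitriangular subgroup of ${\rm SL}_2(\mathfrak o_\ell)$; a non-degenerate character is $\begin{pmatrix}1&u\\0&1\end{pmatrix}\mapsto\varphi_1(u)$ with $\varphi_1$ a character of $(\mathfrak o_\ell,+)$ nontrivial on $\varpi^{\ell-1}\mathfrak o_\ell$. Admitting a $\theta$-Whittaker model means $\mathrm{Hom}(\pi,\mathrm{Ind}_{\mathbf U(\mathfrak o_\ell)}^{{\rm SL}_2(\mathfrak o_\ell)}\theta)\ne0$. Let $K_\ell^{\ell-1}=\ker({\rm SL}_2(\mathfrak o_\ell)\to{\rm SL}_2(\mathfrak o_{\ell-1}))$; fixing a primitive $\varphi$, each $x\in\mathfrak{sl}_2(\mathbb F_q)$ gives a character $\varphi_x(I+\varpi^{\ell-1}y)=\varphi(\varpi^{\ell-1}\mathrm{tr}(\hat xy))$. An irreducible representation is cuspidal (resp. split semisimple) if its restriction to $K_\ell^{\ell-1}$ contains $\varphi_x$ where the characteristic polynomial of $x$ is irreducible over $\mathbb F_q$ (resp. splits over $\mathbb F_q$ with distinct roots); such $x$ are regular (characteristic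 polynomial = minimal polynomial). *)

theory Defs
  imports "Jordan_Normal_Form.Char_Poly" "HOL-Computational_Algebra.Polynomial_Factorial"
begin

text \<open>The ring o_l is modelled abstractly as a finite commutative ring 'r together with
  an element varpi and a surjective ring homomorphism red onto the residue field 'k
  whose kernel is the ideal generated by varpi, with varpi^l = 0 and varpi^(l-1) \<noteq> 0.\<close>

definition chain_ring_data :: "nat \<Rightarrow> 'r::{comm_ring_1,finite} \<Rightarrow> ('r \<Rightarrow> 'k::{field,finite}) \<Rightarrow> bool" where
  "chain_ring_data l unif red \<longleftrightarrow>
     red 0 = 0 \<and> red 1 = 1 \<and> (\<forall>a b. red (a + b) = red a + red b) \<and>
     (\<forall>a b. red (a * b) = red a * red b) \<and> surj red \<and>
     {a. red a = 0} = {unif * b | b. True} \<and>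
     unif ^ l = 0 \<and> unif ^ (l - 1) \<noteq> 0"

definition SL2 :: "'r::comm_ring_1 mat set" where
  "SL2 = {g \<in> carrier_mat 2 2. det g = 1}"

definition unip :: "'r::comm_ring_1 \<Rightarrow> 'r mat" where
  "unip a = mat 2 2 (\<lambda>(i,j). if i = j then 1 else if i = 0 \<and> j = 1 then a else 0)"

definition tr2 :: "'a::comm_ring_1 mat \<Rightarrow> 'a" where
  "tr2 A = A $$ (0,0) + A $$ (1,1)"

definition add_char :: "('r::comm_ring_1 \<Rightarrow> complex) \<Rightarrow> bool" where
  "add_char \<psi> \<longleftrightarrow> (\<forall>a b. \<psi> (a + b) = \<psi> a * \<psi> b) \<and> (\<forall>a. \<psi> a \<noteq> 0)"

definition primitive_char :: "nat \<Rightarrow> 'r::comm_ring_1 \<Rightarrow> ('r \<Rightarrow> complex) \<Rightarrow> bool" where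
  "primitive_char l unif \<psi> \<longleftrightarrow> add_char \<psi> \<and> (\<exists>a. \<psi> (unif ^ (l - 1) * a) \<noteq> 1)"

definition is_rep :: "nat \<Rightarrow> ('r::comm_ring_1 mat \<Rightarrow> complex mat) \<Rightarrow> bool" where
  "is_rep n \<rho> \<longleftrightarrow> (\<forall>g\<in>SL2. \<rho> g \<in> carrier_mat n n) \<and> \<rho> (1\<^sub>m 2) = 1\<^sub>m n \<and>
     (\<forall>g\<in>SL2. \<forall>h\<in>SL2. \<rho> (g * h) = \<rho> g * \<rho> h)"

definition invariant_subspace :: "nat \<Rightarrow> ('r::comm_ring_1 mat \<Rightarrow> complex mat) \<Rightarrow> complex vec set \<Rightarrow> bool" where
  "invariant_subspace n \<rho> W \<longleftrightarrow> W \<subseteq> carrier_vec n \<and> 0\<^sub>v n \<in> W \<and>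
     (\<forall>v\<in>W. \<forall>w\<in>W. v + w \<in> W) \<and> (\<forall>c. \<forall>v\<in>W. c \<cdot>\<^sub>v v \<in> W) \<and>
     (\<forall>g\<in>SL2. \<forall>v\<in>W. \<rho> g *\<^sub>v v \<in> W)"

definition irreducible_rep :: "nat \<Rightarrow> ('r::comm_ring_1 mat \<Rightarrow> complex mat) \<Rightarrow> bool" where
  "irreducible_rep n \<rho> \<longleftrightarrow> is_rep n \<rho> \<and> n > 0 \<and>
     (\<forall>W. invariant_subspace n \<rho> W \<longrightarrow> W = {0\<^sub>v n} \<or> W = carrier_vec n)"

text \<open>The restriction of rho to K_l^{l-1} = {I + varpi^(l-1) y} contains the character
  phi_x(I + varpi^(l-1) y) = phi(varpi^(l-1) tr(xhat y)), xhat a lift of x in sl_2(F_q).\<close>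
definition contains_phi_x :: "nat \<Rightarrow> 'r::{comm_ring_1,finite} \<Rightarrow> ('r \<Rightarrow> 'k::{field,finite}) \<Rightarrow>
    ('r \<Rightarrow> complex) \<Rightarrow> nat \<Rightarrow> ('r mat \<Rightarrow> complex mat) \<Rightarrow> 'k mat \<Rightarrow> bool" where
  "contains_phi_x l unif red \<phi> n \<rho> x \<longleftrightarrow>
     (\<exists>xh \<in> carrier_mat 2 2. map_mat red xh = x \<and>
       (\<exists>v \<in> carrier_vec n. v \<noteq> 0\<^sub>v n \<and>
          (\<forall>y \<in> carrier_mat 2 2. 1\<^sub>m 2 + unif ^ (l - 1) \<cdot>\<^sub>m y \<in> SL2 \<longrightarrow>
             \<rho> (1\<^sub>m 2 + unif ^ (l - 1) \<cdot>\<^sub>m y) *\<^sub>v v = \<phi> (unif ^ (l - 1) * tr2 (xh * y)) \<cdot>\<^sub>v v)))"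

definition sl2_elt :: "'k::field mat \<Rightarrow> bool" where
  "sl2_elt x \<longleftrightarrow> x \<in> carrier_mat 2 2 \<and> tr2 x = 0"

definition cuspidal :: "nat \<Rightarrow> 'r::{comm_ring_1,finite} \<Rightarrow> ('r \<Rightarrow> 'k::{field,finite}) \<Rightarrow>
    ('r \<Rightarrow> complex) \<Rightarrow> nat \<Rightarrow> ('r mat \<Rightarrow> complex mat) \<Rightarrow> bool" where
  "cuspidal l unif red \<phi> n \<rho> \<longleftrightarrow>
     (\<exists>x. sl2_elt x \<and> irreducible (char_poly x) \<and> contains_phi_x l unif red \<phi> n \<rho> x)"

definition split_semisimple :: "nat \<Rightarrow> 'r::{comm_ring_1,finite} \<Rightarrow> ('r \<Rightarrow> 'k::{field,finite}) \<Rightarrow>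
    ('r \<Rightarrow> complex) \<Rightarrow> nat \<Rightarrow> ('r mat \<Rightarrow> complex mat) \<Rightarrow> bool" where
  "split_semisimple l unif red \<phi> n \<rho> \<longleftrightarrow>
     (\<exists>x. sl2_elt x \<and> (\<exists>a b. a \<noteq> b \<and> char_poly x = [:-a, 1:] * [:-b, 1:]) \<and>
          contains_phi_x l unif red \<phi> n \<rho> x)"

text \<open>Hom(pi, Ind_U^G theta) \<noteq> 0, where Ind_U^G theta is the space of functions f on SL2
  with f(u g) = theta(u) f(g), G acting by right translation; theta(unip a) = psi a.\<close>
definition has_whittaker_model :: "('r::comm_ring_1 \<Rightarrow> complex) \<Rightarrow> nat \<Rightarrow> ('r mat \<Rightarrow> complex mat) \<Rightarrow> bool" where
  "has_whittaker_model \<psi> n \<rho> \<longleftrightarrow>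
     (\<exists>T :: complex vec \<Rightarrow> 'r mat \<Rightarrow> complex.
        (\<forall>v\<in>carrier_vec n. \<forall>w\<in>carrier_vec n. \<forall>x\<in>SL2. T (v + w) x = T v x + T w x) \<and>
        (\<forall>c. \<forall>v\<in>carrier_vec n. \<forall>x\<in>SL2. T (c \<cdot>\<^sub>v v) x = c * T v x) \<and>
        (\<forall>v\<in>carrier_vec n. \<forall>a. \<forall>x\<in>SL2. T v (unip a * x) = \<psi> a * T v x) \<and>
        (\<forall>v\<in>carrier_vec n. \<forall>g\<in>SL2. \<forall>x\<in>SL2. T (\<rho> g *\<^sub>v v) x = T v (x * g)) \<and>
        (\<exists>v\<in>carrier_vec n. \<exists>x\<in>SL2. T v x \<noteq> 0))"

end

theory Submission
  imports Defs
begin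

text \<open>Let v be a vector on which K_l^{l-1} acts by \<phi>_x. For g in SL_2 with bottom row (c, d), the
  vector \<rho>(g) v is an eigenvector of the deepest unipotents 1 + \<beta>\<varpi>^{l-1} E_12, with eigenvalue
  \<phi>(\<varpi>^{l-1} \<beta> Q(c,d)) for a binary quadratic form Q whose discriminant is 4 det x up to sign. As x
  is regular and p is odd, Q represents every nonzero residue. Fourier analysis on U gives \<rho>(g) v
  a nonzero component on which U acts by a \<mapsto> \<psi>(ka); comparing eigenvalues, first with Q(c,d) \<equiv> 1
  and then with Q(c,d) \<equiv> 1/k, yields such a component with k \<equiv> 1 mod \<varpi>. Then k = t^2, and
  conjugating by diag(t, 1/t) turns it into a nonzero \<psi>-component, i.e. a nonzero \<psi>-Whittaker
  functional.\<close>

definition mat2x2 :: "'a \<Rightarrow> 'a \<Rightarrow> 'a \<Rightarrow> 'a \<Rightarrow> 'a mat" where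
  "mat2x2 a b c d = mat 2 2 (\<lambda>(i,j). if i = 0 then (if j = 0 then a else b) else (if j = 0 then c else d))"

lemma mat2x2_carrier [simp]: "mat2x2 a b c d \<in> carrier_mat 2 2"
  by (simp add: mat2x2_def)

lemma mat2x2_dim [simp]: "dim_row (mat2x2 a b c d) = 2" "dim_col (mat2x2 a b c d) = 2"
  by (simp_all add: mat2x2_def)

lemma mat2x2_index [simp]:
  "mat2x2 a b c d $$ (0,0) = a" "mat2x2 a b c d $$ (0,1) = b"
  "mat2x2 a b c d $$ (1,0) = c" "mat2x2 a b c d $$ (1,1) = d"
  "mat2x2 a b c d $$ (0,Suc 0) = b" "mat2x2 a b c d $$ (Suc 0,0) = c"
  "mat2x2 a b c d $$ (Suc 0,Suc 0) = d"
  by (simp_all add: mat2x2_def)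

lemma mat2x2_eta:
  assumes "A \<in> carrier_mat 2 2"
  shows "A = mat2x2 (A $$ (0,0)) (A $$ (0,1)) (A $$ (1,0)) (A $$ (1,1))"
  using assms by (auto simp: mat2x2_def less_2_cases_iff intro!: eq_matI)

lemma map_mat_mat2x2: "map_mat f (mat2x2 a b c d) = mat2x2 (f a) (f b) (f c) (f d)"
  by (auto simp: mat2x2_def less_2_cases_iff intro!: eq_matI)

lemma mat2x2_eq_iff: "mat2x2 a b c d = mat2x2 a' b' c' d' \<longleftrightarrow> a = a' \<and> b = b' \<and> c = c' \<and> d = d'"
  by (metis mat2x2_index)

lemma mat2x2_mult:
  "mat2x2 a b c d * mat2x2 (e::'a::comm_ring_1) f g h =
     mat2x2 (a*e + b*g) (a*f + b*h) (c*e + d*g) (c*f + d*h)"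
  by (auto simp: mat2x2_def less_2_cases_iff scalar_prod_def numeral_2_eq_2 intro!: eq_matI)

lemma mat2x2_add:
  "mat2x2 a b c d + mat2x2 (e::'a::comm_ring_1) f g h = mat2x2 (a+e) (b+f) (c+g) (d+h)"
  by (auto simp: mat2x2_def less_2_cases_iff intro!: eq_matI)

lemma smult_mat2x2: "k \<cdot>\<^sub>m mat2x2 a b c (d::'a::comm_ring_1) = mat2x2 (k*a) (k*b) (k*c) (k*d)"
  by (auto simp: mat2x2_def less_2_cases_iff intro!: eq_matI)

lemma one_mat2x2: "(1\<^sub>m 2 :: 'a::comm_ring_1 mat) = mat2x2 1 0 0 1"
  by (auto simp: mat2x2_def less_2_cases_iff intro!: eq_matI)

lemma unip_mat2x2: "unip a = mat2x2 1 a 0 1"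
  by (auto simp: mat2x2_def unip_def less_2_cases_iff intro!: eq_matI)

lemma det_2x2:
  assumes "(A::'a::comm_ring_1 mat) \<in> carrier_mat 2 2"
  shows "det A = A $$ (0,0) * A $$ (1,1) - A $$ (0,1) * A $$ (1,0)"
proof -
  have "det A = (\<Sum>j<2. A $$ (0,j) * cofactor A 0 j)"
    by (rule laplace_expansion_row[OF assms]) simp
  also have "\<dots> = A $$ (0,0) * A $$ (1,1) - A $$ (0,1) * A $$ (1,0)"
    using assms by (simp add: numeral_2_eq_2 cofactor_def det_single mat_delete_def insert_index_def)
  finally show ?thesis .
qed

lemma det_mat2x2: "det (mat2x2 a b c (d::'a::comm_ring_1)) = a*d - b*c"
  by (simp add: det_2x2)

lemma tr2_mat2x2: "tr2 (mat2x2 a b c d) = a + d"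
  by (simp add: tr2_def)

lemma char_poly_mat2x2:
  "char_poly (mat2x2 a b c (d::'a::comm_ring_1)) = [:a*d - b*c, - (a + d), 1:]"
  unfolding char_poly_def by (subst det_2x2) (auto simp: char_poly_matrix_def algebra_simps one_pCons)

lemma regular_traceless_det_nonzero:
  fixes x :: "'k::field mat"
  assumes "sl2_elt x"
    and "irreducible (char_poly x) \<or> (\<exists>a b. a \<noteq> b \<and> char_poly x = [:-a, 1:] * [:-b, 1:])"
  shows "det x \<noteq> 0"
proof
  assume det0: "det x = 0"
  have x: "x \<in> carrier_mat 2 2" and tr: "x $$ (0,0) + x $$ (1,1) = 0"
    using assms(1) by (auto simp: sl2_elt_def tr2_def)
  have "char_poly x = [:det x, - (x $$ (0,0) + x $$ (1,1)), 1:]"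
    by (subst (1 2) mat2x2_eta[OF x]) (simp add: char_poly_mat2x2 det_mat2x2)
  also have "\<dots> = [:0, 1:] * [:0, 1:]"
    unfolding det0 tr by simp
  finally have cp: "char_poly x = [:0, 1:] * [:0, 1:]" .
  show False using assms(2)
  proof
    assume "irreducible (char_poly x)"
    hence "is_unit [:0::'k, 1:]" using cp irreducibleD by blast
    thus False by (simp add: is_unit_poly_iff)
  next
    assume "\<exists>a b. a \<noteq> b \<and> char_poly x = [:-a, 1:] * [:-b, 1:]"
    then obtain a b :: 'k where "a \<noteq> b" "[:0, 0, 1:] = [:-a, 1:] * [:-b, 1:]"
      using cp by auto
    thus False by auto
  qed
qed

lemma SL2_mult_closed: "g \<in> SL2 \<Longrightarrow> h \<in> SL2 \<Longrightarrow> g * h \<in> SL2"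
  by (auto simp: SL2_def det_mult)

lemma mat2x2_in_SL2_iff: "mat2x2 a b c (d::'a::comm_ring_1) \<in> SL2 \<longleftrightarrow> a*d - b*c = 1"
  by (simp add: SL2_def det_mat2x2)

lemma one_in_SL2: "1\<^sub>m 2 \<in> SL2"
  by (simp add: SL2_def)

lemma unip_in_SL2 [simp]: "unip a \<in> SL2"
  by (simp add: unip_mat2x2 mat2x2_in_SL2_iff)

lemma unip_add: "unip a * unip b = unip (a + b)"
  by (simp add: unip_mat2x2 mat2x2_mult add.commute)

lemma unip_zero: "unip 0 = 1\<^sub>m 2"
  by (simp add: unip_mat2x2 one_mat2x2)

lemma SL2_adjugate:
  assumes "a*d - b*c = (1::'a::comm_ring_1)"
  shows "mat2x2 a b c d \<in> SL2" "mat2x2 d (-b) (-c) a \<in> SL2"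
    and "mat2x2 d (-b) (-c) a * mat2x2 a b c d = 1\<^sub>m 2"
  using assms by (auto simp: mat2x2_in_SL2_iff mat2x2_mult one_mat2x2 mat2x2_eq_iff algebra_simps)

lemma mult_mat_vec_zero: "M \<in> carrier_mat m n \<Longrightarrow> M *\<^sub>v 0\<^sub>v n = (0\<^sub>v m :: 'a::comm_ring vec)"
  by (intro eq_vecI) (auto simp: scalar_prod_def)

lemma nonzero_vec_index: "w \<noteq> 0\<^sub>v n \<Longrightarrow> dim_vec w = n \<Longrightarrow> \<exists>i<n. w $ i \<noteq> 0"
  by (metis eq_vecI index_zero_vec)

section \<open>Additive characters\<close>

lemma add_char_zero: "add_char \<chi> \<Longrightarrow> \<chi> 0 = 1"
  unfolding add_char_def by (metis add_0 mult_cancel_right1)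

lemma add_char_add: "add_char \<chi> \<Longrightarrow> \<chi> (a + b) = \<chi> a * \<chi> b"
  unfolding add_char_def by blast

lemma add_char_uminus: "add_char \<chi> \<Longrightarrow> \<chi> (- a) * \<chi> a = 1"
  by (metis add.left_inverse add_char_add add_char_zero)

lemma add_char_scale: "add_char \<chi> \<Longrightarrow> add_char (\<lambda>a. \<chi> (c * a))"
  unfolding add_char_def by (simp add: distrib_left)

lemma add_char_sum_eq_0:
  fixes \<chi> :: "'a::{comm_ring_1,finite} \<Rightarrow> complex"
  assumes "add_char \<chi>" "\<chi> c0 \<noteq> 1"
  shows "(\<Sum>c\<in>UNIV. \<chi> c) = 0"
proof -
  have "(\<Sum>c\<in>UNIV. \<chi> c) = (\<Sum>c\<in>UNIV. \<chi> (c + c0))"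
    by (rule sum.reindex_bij_witness[of _ "\<lambda>c. c + c0" "\<lambda>c. c - c0"]) auto
  also have "\<dots> = \<chi> c0 * (\<Sum>c\<in>UNIV. \<chi> c)"
    using add_char_add[OF assms(1)] by (simp add: sum_distrib_left mult.commute)
  finally have "(\<chi> c0 - 1) * (\<Sum>c\<in>UNIV. \<chi> c) = 0" by (simp add: algebra_simps)
  thus ?thesis using assms(2) by simp
qed

section \<open>Binary quadratic forms over a finite field\<close>

lemma card_squares_lower_bound:
  "card (UNIV :: 'k::{field,finite} set) + 1 \<le> 2 * card (range (\<lambda>X::'k. X * X))"
proof -
  define S where "S = range (\<lambda>X::'k. X * X)"
  define r where "r s = (SOME X. X * X = s)" for s :: 'k
  let ?N = "UNIV - {0::'k}"
  let ?h = "\<lambda>X::'k. (X * X, X = r (X * X))"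
  have rr: "r (X * X) * r (X * X) = X * X" for X
    unfolding r_def by (rule someI) auto
  \<comment> \<open>each nonzero square has exactly the two square roots \<plusminus>r(s)\<close>
  have "inj_on ?h ?N"
  proof (rule inj_onI)
    fix X Y assume "?h X = ?h Y"
    hence e: "X * X = Y * Y" and b: "(X = r (X * X)) = (Y = r (Y * Y))" by auto
    show "X = Y"
    proof (cases "X = r (X * X)")
      case True thus ?thesis using b e by simp
    next
      case False
      hence "X = - r (X * X)" and "Y = - r (X * X)"
        using b e rr[of X] rr[of Y] square_eq_iff by metis+
      thus ?thesis by simp
    qed
  qed
  moreover have "?h ` ?N \<subseteq> (S - {0}) \<times> UNIV"
    unfolding S_def by auto
  ultimately have "card ?N \<le> card ((S - {0}) \<times> (UNIV :: bool set))"
    by (intro card_inj_on_le) auto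
  hence "card ?N \<le> 2 * card (S - {0})"
    by (simp add: card_cartesian_product)
  moreover have "0 \<in> S" unfolding S_def by auto
  hence "card (S - {0}) = card S - 1" and "card S \<ge> 1"
    by (auto simp: Suc_le_eq card_gt_0_iff)
  moreover have "card ?N = card (UNIV :: 'k set) - 1" and "card (UNIV :: 'k set) \<ge> 1"
    by (simp_all add: Suc_le_eq card_gt_0_iff)
  ultimately show ?thesis unfolding S_def by linarith
qed

lemma binary_form_represents_all:
  fixes \<alpha> \<beta> \<gamma> \<tau> :: "'k::{field,finite}"
  assumes two: "(2::'k) \<noteq> 0" and disc: "\<alpha> * \<alpha> + \<beta> * \<gamma> \<noteq> 0"
  shows "\<exists>c d. \<gamma> * d * d + 2 * \<alpha> * c * d - \<beta> * c * c = \<tau>"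
proof (cases "\<beta> = 0")
  case True
  hence "\<alpha> \<noteq> 0" using disc by auto
  hence "\<gamma> * 1 * 1 + 2 * \<alpha> * ((\<tau> - \<gamma>) / (2 * \<alpha>)) * 1 - \<beta> * ((\<tau> - \<gamma>) / (2 * \<alpha>)) * ((\<tau> - \<gamma>) / (2 * \<alpha>)) = \<tau>"
    using True two by simp
  thus ?thesis by blast
next
  case False
  define D where "D = \<alpha> * \<alpha> + \<beta> * \<gamma>"
  define S1 where "S1 = range (\<lambda>X::'k. X * X)"
  define S2 where "S2 = (\<lambda>y. D * y - \<beta> * \<tau>) ` S1"
  \<comment> \<open>completing the square: \<beta> Q(c,d) = D d^2 - (\<beta>c - \<alpha>d)^2, and two sets of more than q/2 elements meet\<close>
  have "card (UNIV :: 'k set) + 1 \<le> 2 * card S1"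
    unfolding S1_def by (rule card_squares_lower_bound)
  moreover have "inj_on (\<lambda>y. D * y - \<beta> * \<tau>) S1"
    using disc unfolding D_def by (auto intro!: inj_onI)
  hence "card S2 = card S1" unfolding S2_def by (rule card_image)
  moreover have "card S1 + card S2 = card (S1 \<union> S2) + card (S1 \<inter> S2)"
    by (rule card_Un_Int) auto
  moreover have "card (S1 \<union> S2) \<le> card (UNIV :: 'k set)"
    by (rule card_mono) auto
  ultimately have "card (S1 \<inter> S2) \<noteq> 0" by linarith
  hence "S1 \<inter> S2 \<noteq> {}" by auto
  then obtain X d where Xd: "X * X = D * (d * d) - \<beta> * \<tau>"
    unfolding S1_def S2_def by auto
  define c where "c = (X + \<alpha> * d) / \<beta>"
  have bc: "\<beta> * c = X + \<alpha> * d" unfolding c_def using False by simp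
  have "\<beta> * (\<gamma> * d * d + 2 * \<alpha> * c * d - \<beta> * c * c) =
        \<beta> * \<gamma> * d * d + 2 * \<alpha> * d * (\<beta> * c) - (\<beta> * c) * (\<beta> * c)"
    by (simp add: algebra_simps)
  also have "\<dots> = \<beta> * \<tau>"
    unfolding bc using Xd unfolding D_def by (simp add: algebra_simps)
  finally have "\<gamma> * d * d + 2 * \<alpha> * c * d - \<beta> * c * c = \<tau>" using False by simp
  thus ?thesis by blast
qed

text \<open>conj_form x c d = tr(x g^{-1} E_12 g) for any g with bottom row (c, d).\<close>

definition conj_form :: "'a::comm_ring_1 mat \<Rightarrow> 'a \<Rightarrow> 'a \<Rightarrow> 'a" where
  "conj_form x c d = x $$ (1,0) * d * d + (x $$ (0,0) - x $$ (1,1)) * c * d - x $$ (0,1) * c * c"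

lemma two_neq_zero_if_odd_char:
  assumes "CHAR('k::field) = p" "odd p"
  shows "(2::'k) \<noteq> 0"
proof
  assume "(2::'k) = 0"
  hence "p dvd 2" using assms(1) of_nat_eq_0_iff_char_dvd[of 2, where 'a='k] by simp
  moreover from this have "p \<noteq> 0" "p \<noteq> 2" "p \<le> 2"
    using assms(2) by (auto dest: dvd_imp_le)
  ultimately have "p = 1" by linarith
  thus False using assms(1) CHAR_not_1 by auto
qed

section \<open>The finite chain ring\<close>

locale chain_ring =
  fixes l :: nat and unif :: "'r::{comm_ring_1,finite}" and red :: "'r \<Rightarrow> 'k::{field,finite}"
  assumes chain_ring_data: "chain_ring_data l unif red"
    and l_ge_2: "l \<ge> 2" and two_nonzero: "(2::'k) \<noteq> 0"
begin

lemma red_0 [simp]: "red 0 = 0" and red_1 [simp]: "red 1 = 1"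
  and red_add [simp]: "red (a + b) = red a + red b"
  and red_mult [simp]: "red (a * b) = red a * red b"
  and red_surj: "surj red" and red_eq_0_iff: "red a = 0 \<longleftrightarrow> (\<exists>b. a = unif * b)"
  and unif_power_l: "unif ^ l = 0"
  using chain_ring_data unfolding chain_ring_data_def by (auto simp: set_eq_iff)

lemma red_uminus [simp]: "red (- a) = - red a"
  using red_add[of a "- a"] by (simp add: eq_neg_iff_add_eq_0 add.commute)

lemma red_diff [simp]: "red (a - b) = red a - red b"
  using red_add[of a "- b"] by simp

lemma red_lift: "\<exists>a. red a = y"
  using red_surj by (metis surjD)

lemma one_plus_unif_mult_unit: "\<exists>c. (1 + unif * m) * c = 1"
proof -
  define x where "x = - (unif * m)"
  have "x ^ l = (- m) ^ l * unif ^ l"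
    unfolding x_def by (simp add: power_mult_distrib[symmetric] mult.commute)
  hence "(1 - x) * (\<Sum>i<l. x ^ i) = 1"
    using unif_power_l one_diff_power_eq[of x l] by simp
  thus ?thesis unfolding x_def by auto
qed

lemma unit_if_red_nonzero:
  assumes "red a \<noteq> 0"
  shows "\<exists>b. a * b = 1"
proof -
  obtain b0 where b0: "red b0 = inverse (red a)" using red_lift by blast
  have "red (a * b0 - 1) = 0" using assms b0 by simp
  then obtain m where "a * b0 - 1 = unif * m" using red_eq_0_iff by blast
  hence "a * b0 = 1 + unif * m" by (simp add: algebra_simps)
  moreover obtain c where "(1 + unif * m) * c = 1" using one_plus_unif_mult_unit by blast
  ultimately show ?thesis by (metis mult.assoc)
qed

lemma top_mult_eq_if_red_eq:
  assumes "red a = red b"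
  shows "unif ^ (l - 1) * a = unif ^ (l - 1) * b"
proof -
  obtain m where "a - b = unif * m" using assms red_eq_0_iff[of "a - b"] by auto
  moreover have "Suc (l - 1) = l" using l_ge_2 by simp
  hence "unif ^ (l - 1) * unif = 0" using unif_power_l power_Suc2 by metis
  ultimately have "unif ^ (l - 1) * (a - b) = 0" by (metis mult.assoc mult_zero_left)
  thus ?thesis by (simp add: algebra_simps)
qed

lemma top_ideal_dvd:
  assumes "a \<noteq> 0"
  shows "\<exists>c. c * a = unif ^ (l - 1) * x"
proof -
  define J where "J = {j. j \<le> l \<and> (\<exists>b. a = unif ^ j * b)}"
  have fin: "finite J" and "0 \<in> J" unfolding J_def by auto
  define j where "j = Max J"
  have "j \<in> J" unfolding j_def using fin \<open>0 \<in> J\<close> by (intro Max_in) auto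
  then obtain b where b: "a = unif ^ j * b" and "j \<le> l" unfolding J_def by auto
  moreover have "j \<noteq> l" using b assms unif_power_l by auto
  ultimately have j: "j < l" by simp
  \<comment> \<open>j is the valuation of a, so b is a unit\<close>
  have "red b \<noteq> 0"
  proof
    assume "red b = 0"
    then obtain b' where "b = unif * b'" using red_eq_0_iff by blast
    hence "a = unif ^ Suc j * b'" using b by (simp add: mult.assoc)
    hence "Suc j \<in> J" unfolding J_def using j by auto
    thus False using Max_ge[OF fin] unfolding j_def by fastforce
  qed
  then obtain b' where bb: "b * b' = 1" using unit_if_red_nonzero by blast
  have "unif ^ (l - 1 - j) * x * b' * a = unif ^ (l - 1 - j) * unif ^ j * x * (b * b')"
    unfolding b by (simp only: ac_simps)
  also have "unif ^ (l - 1 - j) * unif ^ j = unif ^ (l - 1)"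
    using j by (simp only: power_add[symmetric]) simp
  finally show ?thesis using bb by auto
qed

lemma sqrt_of_principal_unit:
  assumes "red c = 1"
  shows "\<exists>t. t * t = c \<and> red t = 1"
proof -
  let ?S = "{t. red t = 1}"
  have "inj_on (\<lambda>t. t * t) ?S"
  proof (rule inj_onI)
    fix t s assume "t \<in> ?S" "s \<in> ?S" and e: "t * t = s * s"
    hence "red (t + s) \<noteq> 0" using two_nonzero by simp
    then obtain u where u: "(t + s) * u = 1" using unit_if_red_nonzero by blast
    have "(t - s) * (t + s) = 0" using e by (simp add: algebra_simps)
    hence "(t - s) * ((t + s) * u) = 0" by (simp only: mult.assoc[symmetric]) simp
    thus "t = s" using u by simp
  qed
  hence "(\<lambda>t. t * t) ` ?S = ?S" by (intro endo_inj_surj) auto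
  thus ?thesis using assms by (metis (mono_tags, lifting) imageE mem_Collect_eq)
qed

lemma primitive_char_sum_eq_0:
  assumes "primitive_char l unif \<psi>" "a \<noteq> 0"
  shows "(\<Sum>c\<in>UNIV. \<psi> (c * a)) = 0"
proof -
  obtain x0 where x0: "\<psi> (unif ^ (l - 1) * x0) \<noteq> 1"
    using assms(1) unfolding primitive_char_def by blast
  obtain c where "c * a = unif ^ (l - 1) * x0" using top_ideal_dvd[OF assms(2)] by blast
  hence "\<psi> (c * a) \<noteq> 1" using x0 by simp
  moreover have "add_char (\<lambda>c. \<psi> (c * a))"
    using assms(1) add_char_scale[of \<psi> a] unfolding primitive_char_def by (simp add: mult.commute)
  ultimately show ?thesis using add_char_sum_eq_0[of "\<lambda>c. \<psi> (c * a)" c] by simp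
qed

lemma primitive_char_level:
  assumes "primitive_char l unif \<psi>" "\<And>b. \<psi> (unif ^ (l - 1) * (c * b)) = 1"
  shows "red c = 0"
proof (rule ccontr)
  assume "red c \<noteq> 0"
  then obtain c' where "c * c' = 1" using unit_if_red_nonzero by blast
  moreover obtain x0 where "\<psi> (unif ^ (l - 1) * x0) \<noteq> 1"
    using assms(1) unfolding primitive_char_def by blast
  ultimately show False using assms(2)[of "c' * x0"] by (simp add: mult.assoc[symmetric])
qed

end

section \<open>Isotypic projections for the unipotent subgroup\<close>

locale sl2_rep = chain_ring l unif red
  for l unif and red :: "'r::{comm_ring_1,finite} \<Rightarrow> 'k::{field,finite}" +
  fixes n :: nat and \<rho> :: "'r mat \<Rightarrow> complex mat"
  assumes is_rep: "is_rep n \<rho>"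
begin

lemma rho_carrier [simp]: "g \<in> SL2 \<Longrightarrow> \<rho> g \<in> carrier_mat n n"
  using is_rep unfolding is_rep_def by blast

lemma rho_mult: "g \<in> SL2 \<Longrightarrow> h \<in> SL2 \<Longrightarrow> \<rho> (g * h) = \<rho> g * \<rho> h"
  using is_rep unfolding is_rep_def by blast

lemma rho_one: "\<rho> (1\<^sub>m 2) = 1\<^sub>m n"
  using is_rep unfolding is_rep_def by blast

lemma rho_dim [simp]: "g \<in> SL2 \<Longrightarrow> dim_row (\<rho> g) = n" "g \<in> SL2 \<Longrightarrow> dim_col (\<rho> g) = n"
  using rho_carrier[of g] by (auto simp del: rho_carrier)

lemma rho_mult_vec_carrier [simp]: "g \<in> SL2 \<Longrightarrow> \<rho> g *\<^sub>v w \<in> carrier_vec n"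
  by (metis carrier_vecI dim_mult_mat_vec rho_dim(1))

lemma rho_mult_vec_assoc:
  "g \<in> SL2 \<Longrightarrow> h \<in> SL2 \<Longrightarrow> w \<in> carrier_vec n \<Longrightarrow> \<rho> g *\<^sub>v (\<rho> h *\<^sub>v w) = \<rho> (g * h) *\<^sub>v w"
  by (simp add: rho_mult assoc_mult_mat_vec[symmetric, of _ n n _ n])

lemma rho_one_mult_vec: "w \<in> carrier_vec n \<Longrightarrow> \<rho> (1\<^sub>m 2) *\<^sub>v w = w"
  by (simp add: rho_one)

definition U_proj :: "('r \<Rightarrow> complex) \<Rightarrow> complex vec \<Rightarrow> complex vec" where
  "U_proj \<chi> w = vec n (\<lambda>i. \<Sum>a\<in>UNIV. \<chi> (- a) * (\<rho> (unip a) *\<^sub>v w) $ i)"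

lemma U_proj_carrier [simp]: "U_proj \<chi> w \<in> carrier_vec n"
  and U_proj_dim [simp]: "dim_vec (U_proj \<chi> w) = n"
  by (simp_all add: U_proj_def)

lemma U_proj_unip:
  assumes "add_char \<chi>" "w \<in> carrier_vec n"
  shows "U_proj \<chi> (\<rho> (unip b) *\<^sub>v w) = \<chi> b \<cdot>\<^sub>v U_proj \<chi> w"
proof (rule eq_vecI)
  fix i assume "i < dim_vec (\<chi> b \<cdot>\<^sub>v U_proj \<chi> w)"
  hence i: "i < n" by simp
  have "U_proj \<chi> (\<rho> (unip b) *\<^sub>v w) $ i = (\<Sum>a\<in>UNIV. \<chi> (- a) * (\<rho> (unip (a + b)) *\<^sub>v w) $ i)"
    using i assms by (simp add: U_proj_def rho_mult_vec_assoc unip_add)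
  also have "\<dots> = (\<Sum>a\<in>UNIV. \<chi> (- (a - b)) * (\<rho> (unip a) *\<^sub>v w) $ i)"
    by (rule sum.reindex_bij_witness[of _ "\<lambda>a. a - b" "\<lambda>a. a + b"]) auto
  also have "\<dots> = (\<Sum>a\<in>UNIV. \<chi> b * (\<chi> (- a) * (\<rho> (unip a) *\<^sub>v w) $ i))"
  proof (rule sum.cong[OF refl])
    fix a
    have "\<chi> (- (a - b)) = \<chi> b * \<chi> (- a)" using add_char_add[OF assms(1), of b "- a"] by simp
    thus "\<chi> (- (a - b)) * (\<rho> (unip a) *\<^sub>v w) $ i = \<chi> b * (\<chi> (- a) * (\<rho> (unip a) *\<^sub>v w) $ i)"
      by (simp add: mult.assoc)
  qed
  also have "\<dots> = (\<chi> b \<cdot>\<^sub>v U_proj \<chi> w) $ i"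
    using i by (simp add: U_proj_def sum_distrib_left)
  finally show "U_proj \<chi> (\<rho> (unip b) *\<^sub>v w) $ i = (\<chi> b \<cdot>\<^sub>v U_proj \<chi> w) $ i" .
qed simp

lemma U_proj_smult:
  assumes "w \<in> carrier_vec n"
  shows "U_proj \<chi> (k \<cdot>\<^sub>v w) = k \<cdot>\<^sub>v U_proj \<chi> w"
proof -
  have "\<rho> (unip a) *\<^sub>v (k \<cdot>\<^sub>v w) = k \<cdot>\<^sub>v (\<rho> (unip a) *\<^sub>v w)" for a
    using assms by (intro mult_mat_vec[of _ n n]) auto
  thus ?thesis by (intro eq_vecI) (simp_all add: U_proj_def sum_distrib_left ac_simps)
qed

lemma U_proj_add:
  assumes "u \<in> carrier_vec n" "w \<in> carrier_vec n"
  shows "U_proj \<chi> (u + w) = U_proj \<chi> u + U_proj \<chi> w"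
proof -
  have "\<rho> (unip a) *\<^sub>v (u + w) = \<rho> (unip a) *\<^sub>v u + \<rho> (unip a) *\<^sub>v w" for a
    using assms by (intro mult_add_distrib_mat_vec[of _ n n]) auto
  thus ?thesis by (intro eq_vecI) (simp_all add: U_proj_def sum.distrib distrib_left)
qed

lemma mult_U_proj:
  assumes "M \<in> carrier_mat n n" "w \<in> carrier_vec n"
  shows "M *\<^sub>v U_proj \<chi> w = vec n (\<lambda>i. \<Sum>a\<in>UNIV. \<chi> (- a) * (M *\<^sub>v (\<rho> (unip a) *\<^sub>v w)) $ i)"
proof (rule eq_vecI)
  fix i assume "i < dim_vec (vec n (\<lambda>i. \<Sum>a\<in>UNIV. \<chi> (- a) * (M *\<^sub>v (\<rho> (unip a) *\<^sub>v w)) $ i))"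
  hence i: "i < n" by simp
  have row: "(M *\<^sub>v V) $ i = (\<Sum>j<n. M $$ (i, j) * V $ j)" if "V \<in> carrier_vec n" for V
    using assms(1) that i by (simp add: scalar_prod_def lessThan_atLeast0)
  have "(M *\<^sub>v U_proj \<chi> w) $ i = (\<Sum>j<n. M $$ (i, j) * (\<Sum>a\<in>UNIV. \<chi> (- a) * (\<rho> (unip a) *\<^sub>v w) $ j))"
    by (simp add: row U_proj_def)
  also have "\<dots> = (\<Sum>a\<in>UNIV. \<chi> (- a) * (\<Sum>j<n. M $$ (i, j) * (\<rho> (unip a) *\<^sub>v w) $ j))"
    by (simp add: sum_distrib_left ac_simps sum.swap[of _ "{..<n}"])
  also have "\<dots> = (\<Sum>a\<in>UNIV. \<chi> (- a) * (M *\<^sub>v (\<rho> (unip a) *\<^sub>v w)) $ i)"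
    by (simp add: row)
  finally show "(M *\<^sub>v U_proj \<chi> w) $ i = vec n (\<lambda>i. \<Sum>a\<in>UNIV. \<chi> (- a) * (M *\<^sub>v (\<rho> (unip a) *\<^sub>v w)) $ i) $ i"
    using i by simp
qed (use assms in simp)

text \<open>Fourier inversion on U: w is the sum over c of its components U_proj (\<lambda>a. \<psi> (c * a)) w,
  because the characters a \<mapsto> \<psi>(ca) are orthogonal when \<psi> is primitive.\<close>

lemma U_proj_nonzero_for_some:
  assumes "primitive_char l unif \<psi>" "w \<in> carrier_vec n" "w \<noteq> 0\<^sub>v n"
  shows "\<exists>c. U_proj (\<lambda>a. \<psi> (c * a)) w \<noteq> 0\<^sub>v n"
proof (rule ccontr)
  assume "\<nexists>c. U_proj (\<lambda>a. \<psi> (c * a)) w \<noteq> 0\<^sub>v n"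
  hence z: "\<And>c. U_proj (\<lambda>a. \<psi> (c * a)) w = 0\<^sub>v n" by blast
  have orth: "(\<Sum>c\<in>UNIV. \<psi> (c * - a)) = (if a = 0 then of_nat (card (UNIV :: 'r set)) else 0)" for a
    using assms(1) primitive_char_sum_eq_0[OF assms(1), of "- a"]
    by (auto simp: primitive_char_def add_char_zero)
  have "w = 0\<^sub>v n"
  proof (rule eq_vecI)
    fix i assume "i < dim_vec (0\<^sub>v n :: complex vec)"
    hence i: "i < n" by simp
    have "0 = (\<Sum>c\<in>UNIV. U_proj (\<lambda>a. \<psi> (c * a)) w $ i)" using z i by simp
    also have "\<dots> = (\<Sum>c\<in>UNIV. \<Sum>a\<in>UNIV. \<psi> (c * - a) * (\<rho> (unip a) *\<^sub>v w) $ i)"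
      using i by (simp add: U_proj_def)
    also have "\<dots> = (\<Sum>a\<in>UNIV. (\<Sum>c\<in>UNIV. \<psi> (c * - a)) * (\<rho> (unip a) *\<^sub>v w) $ i)"
      by (subst sum.swap) (simp add: sum_distrib_right)
    also have "\<dots> = (\<Sum>a\<in>UNIV. if a = 0 then of_nat (card (UNIV :: 'r set)) * (\<rho> (unip a) *\<^sub>v w) $ i else 0)"
      using orth by (intro sum.cong) auto
    also have "\<dots> = of_nat (card (UNIV :: 'r set)) * w $ i"
      using assms(2) by (simp add: unip_zero rho_one_mult_vec)
    finally show "w $ i = 0\<^sub>v n $ i" using i by simp
  qed (use assms in simp)
  thus False using assms(3) by simp
qed

lemma U_proj_eigenvalue:
  assumes "add_char \<chi>" "w \<in> carrier_vec n"
    and "\<rho> (unip \<beta>) *\<^sub>v w = k \<cdot>\<^sub>v w" "U_proj \<chi> w \<noteq> 0\<^sub>v n"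
  shows "\<chi> \<beta> = k"
proof -
  have "\<chi> \<beta> \<cdot>\<^sub>v U_proj \<chi> w = k \<cdot>\<^sub>v U_proj \<chi> w"
    using U_proj_unip[OF assms(1,2), of \<beta>] assms(3) U_proj_smult[OF assms(2)] by simp
  moreover obtain i where "i < n" "U_proj \<chi> w $ i \<noteq> 0"
    using nonzero_vec_index[OF assms(4) U_proj_dim] by blast
  ultimately show ?thesis by (metis U_proj_dim index_smult_vec(1) mult_cancel_right)
qed

lemma U_proj_torus_conj:
  assumes "add_char \<psi>" "t * t' = 1" "z \<in> carrier_vec n"
    and "U_proj (\<lambda>a. \<psi> (t * t * a)) z \<noteq> 0\<^sub>v n"
  shows "U_proj \<psi> (\<rho> (mat2x2 t 0 0 t') *\<^sub>v z) \<noteq> 0\<^sub>v n"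
proof
  let ?D = "mat2x2 t 0 0 t'" and ?Di = "mat2x2 t' 0 0 t"
  have D: "?D \<in> SL2" "?Di \<in> SL2" and DD: "?Di * ?D = 1\<^sub>m 2"
    using SL2_adjugate[of t t' 0 0] assms(2) by (simp_all add: mult.commute)
  have tt: "t' * t' * (t * t * a) = a" "t * t * (t' * t' * a) = a" for a
  proof -
    have "t' * t' * (t * t * a) = (t * t') * (t * t') * a" "t * t * (t' * t' * a) = (t * t') * (t * t') * a"
      by (simp_all add: ac_simps)
    thus "t' * t' * (t * t * a) = a" "t * t * (t' * t' * a) = a" using assms(2) by simp_all
  qed
  have comm: "unip a * ?D = ?D * unip (t' * t' * a)" for a
  proof -
    have "t * (t' * t' * a) = (t * t') * t' * a" by (simp add: ac_simps)
    thus ?thesis using assms(2) by (simp add: unip_mat2x2 mat2x2_mult mult.commute)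
  qed
  assume Z: "U_proj \<psi> (\<rho> ?D *\<^sub>v z) = 0\<^sub>v n"
  have "U_proj \<psi> (\<rho> ?D *\<^sub>v z) = vec n (\<lambda>i. \<Sum>a\<in>UNIV. \<psi> (- a) * (\<rho> ?D *\<^sub>v (\<rho> (unip (t' * t' * a)) *\<^sub>v z)) $ i)"
    unfolding U_proj_def using assms(3) D by (simp add: rho_mult_vec_assoc comm)
  also have "\<dots> = vec n (\<lambda>i. \<Sum>a\<in>UNIV. \<psi> (t * t * - a) * (\<rho> ?D *\<^sub>v (\<rho> (unip a) *\<^sub>v z)) $ i)"
    by (intro arg_cong[where f="vec n"] ext sum.reindex_bij_witness[of _ "\<lambda>a. t * t * a" "\<lambda>a. t' * t' * a"])
      (auto simp: tt)
  also have "\<dots> = \<rho> ?D *\<^sub>v U_proj (\<lambda>a. \<psi> (t * t * a)) z"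
    using mult_U_proj[OF rho_carrier[OF D(1)] assms(3)] by simp
  finally have "\<rho> ?Di *\<^sub>v (\<rho> ?D *\<^sub>v U_proj (\<lambda>a. \<psi> (t * t * a)) z) = \<rho> ?Di *\<^sub>v 0\<^sub>v n"
    using Z by simp
  hence "U_proj (\<lambda>a. \<psi> (t * t * a)) z = 0\<^sub>v n"
    using D by (simp add: rho_mult_vec_assoc DD rho_one_mult_vec mult_mat_vec_zero)
  thus False using assms(4) by simp
qed

lemma has_whittaker_model_if_U_proj_nonzero:
  assumes \<psi>: "add_char \<psi>" and z: "z \<in> carrier_vec n" and nz: "U_proj \<psi> z \<noteq> 0\<^sub>v n"
  shows "has_whittaker_model \<psi> n \<rho>"
proof -
  obtain i0 where i0: "i0 < n" "U_proj \<psi> z $ i0 \<noteq> 0"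
    using nonzero_vec_index[OF nz U_proj_dim] by blast
  define T where "T v x = U_proj \<psi> (\<rho> x *\<^sub>v v) $ i0" for v x
  show ?thesis unfolding has_whittaker_model_def
  proof (intro exI[of _ T] conjI ballI allI)
    fix v w :: "complex vec" and x :: "'r mat"
    assume "v \<in> carrier_vec n" "w \<in> carrier_vec n" "x \<in> SL2"
    moreover from this have "\<rho> x *\<^sub>v (v + w) = \<rho> x *\<^sub>v v + \<rho> x *\<^sub>v w"
      by (intro mult_add_distrib_mat_vec[of _ n n]) auto
    ultimately show "T (v + w) x = T v x + T w x" unfolding T_def using i0 by (simp add: U_proj_add)
  next
    fix c :: complex and v :: "complex vec" and x :: "'r mat"
    assume "v \<in> carrier_vec n" "x \<in> SL2"
    moreover from this have "\<rho> x *\<^sub>v (c \<cdot>\<^sub>v v) = c \<cdot>\<^sub>v (\<rho> x *\<^sub>v v)"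
      by (intro mult_mat_vec[of _ n n]) auto
    ultimately show "T (c \<cdot>\<^sub>v v) x = c * T v x" unfolding T_def using i0 by (simp add: U_proj_smult)
  next
    fix v :: "complex vec" and a :: 'r and x :: "'r mat"
    assume "v \<in> carrier_vec n" "x \<in> SL2"
    thus "T v (unip a * x) = \<psi> a * T v x"
      unfolding T_def using i0 by (simp add: rho_mult_vec_assoc[symmetric] U_proj_unip[OF \<psi>])
  next
    fix v :: "complex vec" and g x :: "'r mat"
    assume "v \<in> carrier_vec n" "g \<in> SL2" "x \<in> SL2"
    thus "T (\<rho> g *\<^sub>v v) x = T v (x * g)" unfolding T_def by (simp add: rho_mult_vec_assoc)
  next
    show "\<exists>v\<in>carrier_vec n. \<exists>x\<in>SL2. T v x \<noteq> 0"
      using z i0 one_in_SL2 unfolding T_def by (intro bexI[of _ z] bexI[of _ "1\<^sub>m 2"]) (auto simp: rho_one_mult_vec)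
  qed
qed

section \<open>Whittaker models of regular representations\<close>

context
  fixes \<phi> :: "'r \<Rightarrow> complex" and xh :: "'r mat" and v :: "complex vec"
  assumes xh: "xh \<in> carrier_mat 2 2"
    and v: "v \<in> carrier_vec n" "v \<noteq> 0\<^sub>v n"
    and eigen: "\<And>y. y \<in> carrier_mat 2 2 \<Longrightarrow> 1\<^sub>m 2 + unif ^ (l - 1) \<cdot>\<^sub>m y \<in> SL2 \<Longrightarrow>
       \<rho> (1\<^sub>m 2 + unif ^ (l - 1) \<cdot>\<^sub>m y) *\<^sub>v v = \<phi> (unif ^ (l - 1) * tr2 (xh * y)) \<cdot>\<^sub>v v"
begin

lemma conj_eigenvector_unip:
  assumes det: "a * d - b * c = 1"
  shows "\<rho> (unip (unif ^ (l - 1) * \<beta>)) *\<^sub>v (\<rho> (mat2x2 a b c d) *\<^sub>v v) =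
    \<phi> (unif ^ (l - 1) * (\<beta> * conj_form xh c d)) \<cdot>\<^sub>v (\<rho> (mat2x2 a b c d) *\<^sub>v v)"
proof -
  let ?u = "unif ^ (l - 1)"
  let ?g = "mat2x2 a b c d" and ?gi = "mat2x2 d (-b) (-c) a"
  let ?y = "mat2x2 (\<beta> * (c * d)) (\<beta> * (d * d)) (\<beta> * (- (c * c))) (\<beta> * (- (c * d)))"
  let ?M = "1\<^sub>m 2 + ?u \<cdot>\<^sub>m ?y"
  note g = SL2_adjugate[OF det]
  have lc: "X = Y" if "X - Y = k * (a * d - b * c - 1)" for X Y k :: 'r
    using that det by simp
  have key: "unip (?u * \<beta>) * ?g = ?g * ?M"
    unfolding unip_mat2x2 one_mat2x2 smult_mat2x2 mat2x2_add mat2x2_mult mat2x2_eq_iff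
  proof (intro conjI)
    show "1 * a + ?u * \<beta> * c = a * (1 + ?u * (\<beta> * (c * d))) + b * (0 + ?u * (\<beta> * - (c * c)))"
      by (rule lc[where k="- (?u * \<beta> * c)"]) (simp add: algebra_simps)
    show "1 * b + ?u * \<beta> * d = a * (0 + ?u * (\<beta> * (d * d))) + b * (1 + ?u * (\<beta> * - (c * d)))"
      by (rule lc[where k="- (?u * \<beta> * d)"]) (simp add: algebra_simps)
  qed (simp_all add: algebra_simps)
  have "?M = ?gi * (unip (?u * \<beta>) * ?g)"
    unfolding key by (simp add: assoc_mult_mat[symmetric, of _ 2 2 _ 2 _ 2] g(3))
  hence M: "?M \<in> SL2" using g by (simp add: SL2_mult_closed)
  have "tr2 (xh * ?y) = \<beta> * conj_form xh c d"
    by (subst mat2x2_eta[OF xh]) (simp add: mat2x2_mult tr2_mat2x2 conj_form_def algebra_simps)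
  hence M_v: "\<rho> ?M *\<^sub>v v = \<phi> (?u * (\<beta> * conj_form xh c d)) \<cdot>\<^sub>v v"
    using eigen[OF _ M] by simp
  have "\<rho> (unip (?u * \<beta>)) *\<^sub>v (\<rho> ?g *\<^sub>v v) = \<rho> (unip (?u * \<beta>) * ?g) *\<^sub>v v"
    using g v by (simp add: rho_mult_vec_assoc)
  also have "\<dots> = \<rho> ?g *\<^sub>v (\<rho> ?M *\<^sub>v v)"
    unfolding key using g M v by (simp add: rho_mult_vec_assoc)
  also have "\<dots> = \<rho> ?g *\<^sub>v (\<phi> (?u * (\<beta> * conj_form xh c d)) \<cdot>\<^sub>v v)"
    by (simp only: M_v)
  also have "\<dots> = \<phi> (?u * (\<beta> * conj_form xh c d)) \<cdot>\<^sub>v (\<rho> ?g *\<^sub>v v)"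
    using g v by (intro mult_mat_vec[of _ n n]) auto
  finally show ?thesis .
qed

text \<open>Modulo \<varpi>, conj_form xh c d is the form \<gamma>d^2 + 2\<alpha>cd - \<beta>c^2 of discriminant -4 det x.\<close>

lemma conj_form_realizes_residue:
  assumes traceless: "red (xh $$ (0,0)) + red (xh $$ (1,1)) = 0"
    and det: "red (xh $$ (0,0)) * red (xh $$ (1,1)) - red (xh $$ (0,1)) * red (xh $$ (1,0)) \<noteq> 0"
    and "\<tau> \<noteq> 0"
  shows "\<exists>a b c d. a * d - b * c = 1 \<and> red (conj_form xh c d) = \<tau>"
proof -
  have x11: "red (xh $$ (1,1)) = - red (xh $$ (0,0))"
    using traceless by (simp add: eq_neg_iff_add_eq_0 add.commute)
  have "red (xh $$ (0,0)) * red (xh $$ (0,0)) + red (xh $$ (0,1)) * red (xh $$ (1,0)) =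
      - (red (xh $$ (0,0)) * red (xh $$ (1,1)) - red (xh $$ (0,1)) * red (xh $$ (1,0)))"
    unfolding x11 by (simp add: algebra_simps)
  hence "red (xh $$ (0,0)) * red (xh $$ (0,0)) + red (xh $$ (0,1)) * red (xh $$ (1,0)) \<noteq> 0"
    using det by simp
  then obtain c0 d0 where cd: "red (xh $$ (1,0)) * d0 * d0 + 2 * red (xh $$ (0,0)) * c0 * d0
      - red (xh $$ (0,1)) * c0 * c0 = \<tau>"
    using binary_form_represents_all[OF two_nonzero] by blast
  obtain c d where c: "red c = c0" and d: "red d = d0" using red_lift by metis
  have rQ: "red (conj_form xh c d) = \<tau>"
    unfolding conj_form_def using cd c d x11 by (simp add: algebra_simps)
  \<comment> \<open>(c, d) is then a unimodular row: one of c, d is a unit\<close>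
  consider "red d \<noteq> 0" | "red c \<noteq> 0"
    using rQ \<open>\<tau> \<noteq> 0\<close> by (fastforce simp: conj_form_def)
  thus ?thesis
  proof cases
    case 1
    then obtain d' where "d * d' = 1" using unit_if_red_nonzero by blast
    hence "d' * d - 0 * c = 1" by (simp add: mult.commute)
    thus ?thesis using rQ by blast
  next
    case 2
    then obtain c' where "c * c' = 1" using unit_if_red_nonzero by blast
    hence "0 * d - (- c') * c = 1" by (simp add: mult.commute)
    thus ?thesis using rQ by blast
  qed
qed

lemma component_twisted_by_residue:
  assumes traceless: "red (xh $$ (0,0)) + red (xh $$ (1,1)) = 0"
    and det: "red (xh $$ (0,0)) * red (xh $$ (1,1)) - red (xh $$ (0,1)) * red (xh $$ (1,0)) \<noteq> 0"
    and \<psi>: "primitive_char l unif \<psi>" and "red \<tau> \<noteq> 0"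
  shows "\<exists>w k. w \<in> carrier_vec n \<and> U_proj (\<lambda>a. \<psi> (k * a)) w \<noteq> 0\<^sub>v n \<and>
    (\<forall>b. \<psi> (k * (unif ^ (l - 1) * b)) = \<phi> (unif ^ (l - 1) * (b * \<tau>)))"
proof -
  obtain a b c d where det1: "a * d - b * c = 1" and Q: "red (conj_form xh c d) = red \<tau>"
    using conj_form_realizes_residue[OF traceless det \<open>red \<tau> \<noteq> 0\<close>] by blast
  define w where "w = \<rho> (mat2x2 a b c d) *\<^sub>v v"
  note g = SL2_adjugate[OF det1]
  have w: "w \<in> carrier_vec n" unfolding w_def using g by simp
  have "w \<noteq> 0\<^sub>v n"
  proof
    assume "w = 0\<^sub>v n"
    hence "\<rho> (mat2x2 d (-b) (-c) a) *\<^sub>v w = 0\<^sub>v n" using g by (simp add: mult_mat_vec_zero)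
    thus False using g v unfolding w_def by (simp add: rho_mult_vec_assoc rho_one_mult_vec)
  qed
  then obtain k where k: "U_proj (\<lambda>a. \<psi> (k * a)) w \<noteq> 0\<^sub>v n"
    using U_proj_nonzero_for_some[OF \<psi> w] by blast
  have "\<psi> (k * (unif ^ (l - 1) * \<beta>)) = \<phi> (unif ^ (l - 1) * (\<beta> * \<tau>))" for \<beta>
  proof -
    have "\<psi> (k * (unif ^ (l - 1) * \<beta>)) = \<phi> (unif ^ (l - 1) * (\<beta> * conj_form xh c d))"
      using \<psi> w k conj_eigenvector_unip[OF det1, of \<beta>] unfolding primitive_char_def w_def[symmetric]
      by (intro U_proj_eigenvalue[where \<chi>="\<lambda>a. \<psi> (k * a)", simplified]) (auto intro: add_char_scale)
    also have "unif ^ (l - 1) * (\<beta> * conj_form xh c d) = unif ^ (l - 1) * (\<beta> * \<tau>)"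
      by (rule top_mult_eq_if_red_eq) (simp add: Q)
    finally show ?thesis .
  qed
  thus ?thesis using w k by blast
qed

lemma component_with_principal_unit:
  assumes traceless: "red (xh $$ (0,0)) + red (xh $$ (1,1)) = 0"
    and det: "red (xh $$ (0,0)) * red (xh $$ (1,1)) - red (xh $$ (0,1)) * red (xh $$ (1,0)) \<noteq> 0"
    and \<phi>: "primitive_char l unif \<phi>" and \<psi>: "primitive_char l unif \<psi>"
  shows "\<exists>w k. w \<in> carrier_vec n \<and> U_proj (\<lambda>a. \<psi> (k * a)) w \<noteq> 0\<^sub>v n \<and> red k = 1"
proof -
  let ?u = "unif ^ (l - 1)"
  note twisted = component_twisted_by_residue[OF traceless det \<psi>]
  have \<psi>_char: "add_char \<psi>" using \<psi> unfolding primitive_char_def by blast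
  obtain k1 where k1: "\<And>b. \<psi> (k1 * (?u * b)) = \<phi> (?u * (b * 1))"
    using twisted[of 1] by auto
  have "red k1 \<noteq> 0"
  proof
    assume "red k1 = 0"
    hence "\<phi> (?u * b) = 1" for b
      using k1[of b] top_mult_eq_if_red_eq[of "k1 * b" 0] add_char_zero[OF \<psi>_char]
      by (simp add: mult.left_commute)
    thus False using \<phi> unfolding primitive_char_def by blast
  qed
  then obtain k1' where k1': "red k1' = inverse (red k1)" using red_lift by blast
  then obtain w k where w: "w \<in> carrier_vec n" and k: "U_proj (\<lambda>a. \<psi> (k * a)) w \<noteq> 0\<^sub>v n"
    and kk1: "\<And>b. \<psi> (k * (?u * b)) = \<phi> (?u * (b * k1'))"
    using twisted[of k1'] \<open>red k1 \<noteq> 0\<close> by auto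
  have k_trivial: "\<psi> (k * (?u * b)) = \<psi> (?u * b)" for b
  proof -
    have "\<psi> (k * (?u * b)) = \<psi> (k1 * (?u * (b * k1')))"
      using kk1 k1 by simp
    also have "k1 * (?u * (b * k1')) = ?u * b"
    proof -
      have "?u * (k1 * (b * k1')) = ?u * b"
        by (rule top_mult_eq_if_red_eq) (use k1' \<open>red k1 \<noteq> 0\<close> in simp)
      thus ?thesis by (metis mult.left_commute)
    qed
    finally show ?thesis .
  qed
  have "red (k - 1) = 0"
  proof (rule primitive_char_level[OF \<psi>])
    fix b
    have "?u * ((k - 1) * b) = k * (?u * b) + - (?u * b)" by (simp add: algebra_simps)
    hence "\<psi> (?u * ((k - 1) * b)) = \<psi> (k * (?u * b)) * \<psi> (- (?u * b))"
      by (simp only: add_char_add[OF \<psi>_char])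
    also have "\<dots> = \<psi> (?u * b) * \<psi> (- (?u * b))"
      by (simp only: k_trivial)
    also have "\<dots> = 1"
      using add_char_uminus[OF \<psi>_char, of "?u * b"] by (metis mult.commute)
    finally show "\<psi> (?u * ((k - 1) * b)) = 1" .
  qed
  thus ?thesis using w k by auto
qed

lemma has_whittaker_model_of_eigenvector:
  assumes traceless: "red (xh $$ (0,0)) + red (xh $$ (1,1)) = 0"
    and det: "red (xh $$ (0,0)) * red (xh $$ (1,1)) - red (xh $$ (0,1)) * red (xh $$ (1,0)) \<noteq> 0"
    and \<phi>: "primitive_char l unif \<phi>" and \<psi>: "primitive_char l unif \<psi>"
  shows "has_whittaker_model \<psi> n \<rho>"
proof -
  have \<psi>_char: "add_char \<psi>" using \<psi> unfolding primitive_char_def by blast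
  obtain w k where w: "w \<in> carrier_vec n" and k: "U_proj (\<lambda>a. \<psi> (k * a)) w \<noteq> 0\<^sub>v n"
    and "red k = 1"
    using component_with_principal_unit[OF traceless det \<phi> \<psi>] by blast
  then obtain t where t: "t * t = k" "red t = 1" using sqrt_of_principal_unit by blast
  then obtain t' where tt: "t * t' = 1" using unit_if_red_nonzero by fastforce
  have "U_proj \<psi> (\<rho> (mat2x2 t 0 0 t') *\<^sub>v w) \<noteq> 0\<^sub>v n"
    using U_proj_torus_conj[OF \<psi>_char tt w] k t(1) by simp
  moreover have "mat2x2 t 0 0 t' \<in> SL2" using tt by (simp add: mat2x2_in_SL2_iff)
  ultimately show ?thesis
    using has_whittaker_model_if_U_proj_nonzero[OF \<psi>_char] rho_mult_vec_carrier by blast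
qed

end

lemma has_whittaker_model_if_regular:
  assumes \<phi>: "primitive_char l unif \<phi>" and \<psi>: "primitive_char l unif \<psi>"
    and "sl2_elt x"
    and "irreducible (char_poly x) \<or> (\<exists>a b. a \<noteq> b \<and> char_poly x = [:-a, 1:] * [:-b, 1:])"
    and "contains_phi_x l unif red \<phi> n \<rho> x"
  shows "has_whittaker_model \<psi> n \<rho>"
proof -
  obtain xh v where xh: "xh \<in> carrier_mat 2 2" "map_mat red xh = x" and v: "v \<in> carrier_vec n" "v \<noteq> 0\<^sub>v n"
    and eigen: "\<forall>y \<in> carrier_mat 2 2. 1\<^sub>m 2 + unif ^ (l - 1) \<cdot>\<^sub>m y \<in> SL2 \<longrightarrow>
       \<rho> (1\<^sub>m 2 + unif ^ (l - 1) \<cdot>\<^sub>m y) *\<^sub>v v = \<phi> (unif ^ (l - 1) * tr2 (xh * y)) \<cdot>\<^sub>v v"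
    using assms(5) unfolding contains_phi_x_def by blast
  have x: "x = mat2x2 (red (xh $$ (0,0))) (red (xh $$ (0,1))) (red (xh $$ (1,0))) (red (xh $$ (1,1)))"
    using xh mat2x2_eta[OF xh(1)] map_mat_mat2x2 by metis
  have "red (xh $$ (0,0)) + red (xh $$ (1,1)) = 0"
    using assms(3) unfolding sl2_elt_def x by (simp add: tr2_mat2x2)
  moreover have "red (xh $$ (0,0)) * red (xh $$ (1,1)) - red (xh $$ (0,1)) * red (xh $$ (1,0)) \<noteq> 0"
    using regular_traceless_det_nonzero[OF assms(3,4)] unfolding x by (simp add: det_mat2x2)
  ultimately show ?thesis
    using has_whittaker_model_of_eigenvector[OF xh(1) v] eigen \<phi> \<psi> by blast
qed

end

theorem corollary5p3:
  fixes unif :: "'r::{comm_ring_1,finite}" and red :: "'r \<Rightarrow> 'k::{field,finite}"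
    and l n :: nat and p :: nat and \<phi> :: "'r \<Rightarrow> complex" and \<rho> :: "'r mat \<Rightarrow> complex mat"
  assumes "chain_ring_data l unif red"
    and "CHAR('k) = p" and "odd p"
    and "l \<ge> 2"
    and "primitive_char l unif \<phi>"
    and "irreducible_rep n \<rho>"
    and "cuspidal l unif red \<phi> n \<rho> \<or> split_semisimple l unif red \<phi> n \<rho>"
  shows "\<forall>\<psi>. primitive_char l unif \<psi> \<longrightarrow> has_whittaker_model \<psi> n \<rho>"
proof (intro allI impI)
  fix \<psi> assume \<psi>: "primitive_char l unif \<psi>"
  interpret sl2_rep l unif red n \<rho>
    using assms(1,4,6) two_neq_zero_if_odd_char[OF assms(2,3)]
    by unfold_locales (auto simp: irreducible_rep_def)
  obtain x where "sl2_elt x"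
    and "irreducible (char_poly x) \<or> (\<exists>a b. a \<noteq> b \<and> char_poly x = [:-a, 1:] * [:-b, 1:])"
    and "contains_phi_x l unif red \<phi> n \<rho> x"
    using assms(7) unfolding cuspidal_def split_semisimple_def by blast
  thus "has_whittaker_model \<psi> n \<rho>"
    using has_whittaker_model_if_regular[OF assms(5) \<psi>] by blast
qed

end
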